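(* Let $\sigma$ be a finite sequence of transitions. If $\sigma$ satisfies at least one of the conditions (C1), (C2), (C3) below, then $\sigma$ is not $\omega$-iterable. (C1) For some clock $y\in X(\sigma)\setminus X_0$, $\sigma$ contains atomic guards $y\preccurlyeq d$ and $y\succcurlyeq c$ with $d<c$, or with $d=c$ and $\preccurlyeq$ being $<$, or with $d=c$ and $\succcurlyeq$ being $>$. (C2) There are clocks $x\in X_0$ and $y\in X(\sigma)\setminus X_0$ such that $\sigma$ contains atomic guards $y\preccurlyeq d$ and $x\succcurlyeq c$ with $c>0$. (C3) For some clock $x\in X_0$ the atomic guard $x>0$ occurs in $\sigma$, and for some clock $y\in X(\sigma)\setminus X_0$ both $y\le c$ and $y\ge c$ occur in $\sigma$ (for the same $c$).
   Context: Fix a finite set of clocks $X=\{x_0,x_1,\dots,x_m\}$, where $x_0$ is a special reference clock. A valuation is a map $v:X\to\mathbb{R}_{\ge 0}$ with $v(x_0)=0$. For $\delta\ge 0$, $v+\delta$ is the valuation adding $\delta$ to every clock other than $x_0$; for $R\subseteq X\setminus\{x_0\}$, $[R]v$ sets the clocks of $R$ to $0$ and leaves the others unchanged. A guard is a conjunction of atomic constraints $x\sim c$ with $x\in X\setminus\{x_0\}$, $\sim\in\{<,\le,=,\ge,>\}$, $c\in\mathbb{N}$. A transition $t$ is a pair $(g,R)$ of a guard $g$ and a reset set $R\subseteq X\setminus\{x_0\}$ (control states are omitted). We write $v\xrightarrow{t}^{\delta}v'$ if $v+\delta\models g$ and $v'=[R](v+\delta)$. An execution of a sequence $\sigma=t_1\cdots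 t_k$ is a sequence of valuations $v_0,\dots,v_k$ such that there are $\delta_1,\dots,\delta_k\ge 0$ with $v_{i-1}\xrightarrow{t_i}^{\delta_i}v_i$ for all $i$; we then write $v_0\xrightarrow{\sigma}^{\delta}v_k$ with $\delta=\sum_i\delta_i$, and say $\sigma$ is executable from $v_0$. The sequence $\sigma$ is $\omega$-iterable (from $v_0$) if there are infinite sequences of valuations $v_0,v_1,\dots$ and delays $\delta_1,\delta_2,\dots$ with $v_0\xrightarrow{\sigma}^{\delta_1}v_1\xrightarrow{\sigma}^{\delta_2}v_2\cdots$. For a sequence $\sigma$, $X(\sigma)$ is the set of clocks appearing in $\sigma$ (in guards or resets), and $X_0\subseteq X(\sigma)$ is the set of clocks reset on some transition of $\sigma$. The symbol $\preccurlyeq$ stands for $<$ or $\le$, and $\succcurlyeq$ stands for $>$ or $\ge$; an atomic guard $x=c$ counts both as $x\le c$ and as $x\ge c$. *)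

theory Defs
  imports Main "HOL.Real"
begin

text \<open>Clocks are natural numbers; clock 0 is the reference clock x0.
  The clock set X is {0..m}.\<close>

type_synonym clock = nat
type_synonym valuation = "clock \<Rightarrow> real"

datatype rel = Lt | Le | Eq | Ge | Gt

type_synonym atom = "clock \<times> rel \<times> nat"
text \<open>A guard is a conjunction (list) of atomic guards; a transition is (guard, reset set).\<close>
type_synonym guard = "atom list"
type_synonym transition = "guard \<times> clock set"

definition x0 :: clock where "x0 = 0"

definition is_valuation :: "nat \<Rightarrow> valuation \<Rightarrow> bool" where
  "is_valuation m v \<longleftrightarrow> v x0 = 0 \<and> (\<forall>x\<in>{0..m}. v x \<ge> 0)"

definition delay :: "valuation \<Rightarrow> real \<Rightarrow> valuation" where
  "delay v \<delta> = (\<lambda>x. if x = x0 then v x else v x + \<delta>)"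

definition reset :: "clock set \<Rightarrow> valuation \<Rightarrow> valuation" where
  "reset R v = (\<lambda>x. if x \<in> R then 0 else v x)"

fun sat_rel :: "real \<Rightarrow> rel \<Rightarrow> real \<Rightarrow> bool" where
  "sat_rel a Lt b = (a < b)"
| "sat_rel a Le b = (a \<le> b)"
| "sat_rel a Eq b = (a = b)"
| "sat_rel a Ge b = (a \<ge> b)"
| "sat_rel a Gt b = (a > b)"

definition sat_atom :: "valuation \<Rightarrow> atom \<Rightarrow> bool" where
  "sat_atom v a = (case a of (x, r, c) \<Rightarrow> sat_rel (v x) r (real c))"

definition sat_guard :: "valuation \<Rightarrow> guard \<Rightarrow> bool" where
  "sat_guard v g = (\<forall>a\<in>set g. sat_atom v a)"

definition wf_transition :: "nat \<Rightarrow> transition \<Rightarrow> bool" where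
  "wf_transition m t \<longleftrightarrow>
     (\<forall>(x, r, c)\<in>set (fst t). x \<in> {0..m} - {x0}) \<and> snd t \<subseteq> {0..m} - {x0}"

definition step :: "transition \<Rightarrow> real \<Rightarrow> valuation \<Rightarrow> valuation \<Rightarrow> bool" where
  "step t \<delta> v v' \<longleftrightarrow> \<delta> \<ge> 0 \<and> sat_guard (delay v \<delta>) (fst t) \<and> v' = reset (snd t) (delay v \<delta>)"

inductive exec :: "transition list \<Rightarrow> valuation \<Rightarrow> valuation \<Rightarrow> bool" where
  exec_Nil: "exec [] v v"
| exec_Cons: "step t \<delta> v v'' \<Longrightarrow> exec ts v'' v' \<Longrightarrow> exec (t # ts) v v'"

definition omega_iterable :: "transition list \<Rightarrow> valuation \<Rightarrow> bool" where
  "omega_iterable \<sigma> v0 \<longleftrightarrow>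
     (\<exists>vs :: nat \<Rightarrow> valuation. vs 0 = v0 \<and> (\<forall>n. exec \<sigma> (vs n) (vs (Suc n))))"

definition atoms :: "transition list \<Rightarrow> atom set" where
  "atoms \<sigma> = (\<Union>t\<in>set \<sigma>. set (fst t))"

definition reset_clocks :: "transition list \<Rightarrow> clock set" where
  "reset_clocks \<sigma> = (\<Union>t\<in>set \<sigma>. snd t)"   \<comment> \<open>X_0\<close>

definition clocks_of :: "transition list \<Rightarrow> clock set" where
  "clocks_of \<sigma> = (fst ` atoms \<sigma>) \<union> reset_clocks \<sigma>"   \<comment> \<open>X(sigma)\<close>

definition upper :: "rel \<Rightarrow> bool" where "upper r \<longleftrightarrow> r \<in> {Lt, Le, Eq}"
definition lower :: "rel \<Rightarrow> bool" where "lower r \<longleftrightarrow> r \<in> {Gt, Ge, Eq}"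

definition C1 :: "transition list \<Rightarrow> bool" where
  "C1 \<sigma> \<longleftrightarrow> (\<exists>y \<in> clocks_of \<sigma> - reset_clocks \<sigma>. \<exists>r1 d r2 c.
      (y, r1, d) \<in> atoms \<sigma> \<and> upper r1 \<and> (y, r2, c) \<in> atoms \<sigma> \<and> lower r2 \<and>
      (d < c \<or> (d = c \<and> r1 = Lt) \<or> (d = c \<and> r2 = Gt)))"

definition C2 :: "transition list \<Rightarrow> bool" where
  "C2 \<sigma> \<longleftrightarrow> (\<exists>x \<in> reset_clocks \<sigma>. \<exists>y \<in> clocks_of \<sigma> - reset_clocks \<sigma>. \<exists>r1 d r2 c.
      (y, r1, d) \<in> atoms \<sigma> \<and> upper r1 \<and> (x, r2, c) \<in> atoms \<sigma> \<and> lower r2 \<and> c > 0)"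

definition C3 :: "transition list \<Rightarrow> bool" where
  "C3 \<sigma> \<longleftrightarrow> (\<exists>x \<in> reset_clocks \<sigma>. (x, Gt, 0) \<in> atoms \<sigma>) \<and>
     (\<exists>y \<in> clocks_of \<sigma> - reset_clocks \<sigma>. \<exists>c r1 r2.
      (y, r1, c) \<in> atoms \<sigma> \<and> r1 \<in> {Le, Eq} \<and> (y, r2, c) \<in> atoms \<sigma> \<and> r2 \<in> {Ge, Eq})"

end

theory Submission
  imports Defs
begin

text \<open>
  Along any execution all clocks that are never reset advance by one common
  amount T (the total delay), while every clock reset somewhere stays within [0, T].

  For an infinite run vs 0, vs 1, ... of the sequence and a clock y that is never reset,
  a guard on y is therefore checked at a value between vs n y and vs (n+1) y in every
  round n, and a guard on a reset clock x is checked, in round n+1, at a value of x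
  bounded by the time vs (n+2) y - vs n y elapsed during rounds n and n+1.  Then:
  (C1) contradicts lower bound before upper bound on the monotone clock y;
  (C2) forces y to grow by at least c > 0 every two rounds although it is bounded by d;
  (C3) forces y to grow strictly between rounds 1 and 3 although it is pinned to c.
  The argument does not use that the initial valuation is nonnegative.
\<close>

definition elapsed :: "clock set \<Rightarrow> valuation \<Rightarrow> valuation \<Rightarrow> real \<Rightarrow> bool" where
  "elapsed R v v' T \<longleftrightarrow> T \<ge> 0 \<and> (\<forall>z. z \<noteq> x0 \<longrightarrow>
     (z \<notin> R \<longrightarrow> v' z = v z + T) \<and> (z \<in> R \<longrightarrow> 0 \<le> v' z \<and> v' z \<le> T))"

lemma elapsed_refl: "elapsed {} v v 0"
  by (simp add: elapsed_def)

lemma elapsed_delay: "\<delta> \<ge> 0 \<Longrightarrow> elapsed {} v (delay v \<delta>) \<delta>"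
  by (simp add: elapsed_def delay_def)

lemma elapsed_reset: "elapsed R v (reset R v) 0"
  by (simp add: elapsed_def reset_def)

lemma elapsed_trans:
  assumes "elapsed R1 u v T1" and "elapsed R2 v w T2"
  shows "elapsed (R1 \<union> R2) u w (T1 + T2)"
  using assms unfolding elapsed_def by (auto; smt (verit))

lemma elapsed_step: "step t \<delta> v v' \<Longrightarrow> elapsed (snd t) v v' \<delta>"
  using elapsed_trans[OF elapsed_delay elapsed_reset] by (auto simp: step_def)

lemma exec_elapsed: "exec \<rho> v v' \<Longrightarrow> \<exists>T. elapsed (reset_clocks \<rho>) v v' T"
proof (induction rule: exec.induct)
  case (exec_Nil v)
  show ?case using elapsed_refl by (auto simp: reset_clocks_def)
next
  case (exec_Cons t \<delta> v v'' ts v')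
  then obtain T where "elapsed (reset_clocks ts) v'' v' T" by blast
  from elapsed_trans[OF elapsed_step[OF exec_Cons(1)] this]
  show ?case by (auto simp: reset_clocks_def)
qed

lemma elapsed_bound: "elapsed R v w T \<Longrightarrow> z \<noteq> x0 \<Longrightarrow> w z \<le> max (v z) 0 + T"
  unfolding elapsed_def by (cases "z \<in> R") auto

lemma exec_append: "exec (a @ b) v v' \<Longrightarrow> \<exists>u. exec a v u \<and> exec b u v'"
proof (induction a arbitrary: v)
  case Nil thus ?case by (auto intro: exec.intros)
next
  case (Cons t a)
  from Cons.prems obtain \<delta> v'' where "step t \<delta> v v''" "exec (a @ b) v'' v'"
    by (auto elim: exec.cases)
  with Cons.IH show ?case by (meson exec.intros)
qed

lemma exec_atom:
  assumes "exec \<rho> v v'" and "at \<in> atoms \<rho>"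
  obtains w R1 T1 R2 T2 where "sat_atom w at" "elapsed R1 v w T1" "elapsed R2 w v' T2"
    "R1 \<union> R2 = reset_clocks \<rho>"
proof -
  obtain t where t: "t \<in> set \<rho>" "at \<in> set (fst t)" using assms(2) by (auto simp: atoms_def)
  then obtain a b where split: "\<rho> = a @ t # b" by (meson split_list)
  obtain u where u: "exec a v u" "exec (t # b) u v'" using exec_append assms(1) split by blast
  from u(2) obtain \<delta> u'' where st: "step t \<delta> u u''" and b: "exec b u'' v'"
    by (auto elim: exec.cases)
  have \<delta>: "\<delta> \<ge> 0" and guard: "sat_guard (delay u \<delta>) (fst t)"
    and u'': "u'' = reset (snd t) (delay u \<delta>)"
    using st by (auto simp: step_def)
  obtain T where "elapsed (reset_clocks a) v u T" using exec_elapsed[OF u(1)] by blast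
  from elapsed_trans[OF this elapsed_delay[OF \<delta>]]
  have before: "elapsed (reset_clocks a) v (delay u \<delta>) (T + \<delta>)" by simp
  obtain T' where "elapsed (reset_clocks b) u'' v' T'" using exec_elapsed[OF b] by blast
  from elapsed_trans[OF elapsed_reset this[unfolded u'']]
  have after: "elapsed (snd t \<union> reset_clocks b) (delay u \<delta>) v' T'" by simp
  have "sat_atom (delay u \<delta>) at" using guard t(2) by (auto simp: sat_guard_def)
  moreover have "reset_clocks a \<union> (snd t \<union> reset_clocks b) = reset_clocks \<rho>"
    using split by (auto simp: reset_clocks_def)
  ultimately show ?thesis using that before after by blast
qed

definition run :: "transition list \<Rightarrow> (nat \<Rightarrow> valuation) \<Rightarrow> bool" where
  "run \<sigma> vs \<longleftrightarrow> (\<forall>n. exec \<sigma> (vs n) (vs (Suc n)))"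

lemma omega_iterable_run: "omega_iterable \<sigma> v0 \<Longrightarrow> \<exists>vs. run \<sigma> vs"
  by (auto simp: omega_iterable_def run_def)

lemma run_guard_nonreset:
  assumes "run \<sigma> vs" "y \<noteq> x0" "y \<notin> reset_clocks \<sigma>" "(y, r, c) \<in> atoms \<sigma>"
  obtains w where "sat_atom w (y, r, c)" "vs n y \<le> w y" "w y \<le> vs (Suc n) y"
proof -
  from assms(1) have "exec \<sigma> (vs n) (vs (Suc n))" by (simp add: run_def)
  from exec_atom[OF this assms(4)] obtain w R1 T1 R2 T2 where
    sat: "sat_atom w (y, r, c)" and first: "elapsed R1 (vs n) w T1"
    and second: "elapsed R2 w (vs (Suc n)) T2" and
    R: "R1 \<union> R2 = reset_clocks \<sigma>" .
  have "w y = vs n y + T1" "vs (Suc n) y = w y + T2" "T1 \<ge> 0" "T2 \<ge> 0"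
    using first second R assms(2,3) by (auto simp: elapsed_def)
  then show ?thesis using that sat by simp
qed

lemma run_reset_bound:
  assumes "run \<sigma> vs" "y \<noteq> x0" "y \<notin> reset_clocks \<sigma>" "x \<noteq> x0" "x \<in> reset_clocks \<sigma>"
  shows "0 \<le> vs (Suc n) x \<and> vs (Suc n) x \<le> vs (Suc n) y - vs n y"
proof -
  from assms(1) have "exec \<sigma> (vs n) (vs (Suc n))" by (simp add: run_def)
  from exec_elapsed[OF this] obtain T where "elapsed (reset_clocks \<sigma>) (vs n) (vs (Suc n)) T" ..
  with assms(2-5) show ?thesis by (auto simp: elapsed_def)
qed

lemma run_guard_reset:
  assumes "run \<sigma> vs" "y \<noteq> x0" "y \<notin> reset_clocks \<sigma>" "x \<noteq> x0" "x \<in> reset_clocks \<sigma>"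
    and "(x, r, c) \<in> atoms \<sigma>"
  obtains w where "sat_atom w (x, r, c)" "w x \<le> vs (Suc (Suc n)) y - vs n y"
proof -
  from assms(1) have "exec \<sigma> (vs (Suc n)) (vs (Suc (Suc n)))" by (simp add: run_def)
  from exec_atom[OF this assms(6)] obtain w R1 T1 R2 T2 where
    sat: "sat_atom w (x, r, c)" and first: "elapsed R1 (vs (Suc n)) w T1"
    and second: "elapsed R2 w (vs (Suc (Suc n))) T2" and R: "R1 \<union> R2 = reset_clocks \<sigma>" .
  have y_first: "w y = vs (Suc n) y + T1" and y_second: "vs (Suc (Suc n)) y = w y + T2"
    using first second R assms(2,3) by (auto simp: elapsed_def)
  have "T2 \<ge> 0" using second by (simp add: elapsed_def)
  have "w x \<le> max (vs (Suc n) x) 0 + T1" using elapsed_bound[OF first assms(4)] .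
  also have "\<dots> \<le> vs (Suc n) y - vs n y + T1"
    using run_reset_bound[OF assms(1-5), of n] by simp
  also have "\<dots> \<le> vs (Suc (Suc n)) y - vs n y" using y_first y_second \<open>T2 \<ge> 0\<close> by simp
  finally show ?thesis using that sat by blast
qed

lemma sat_upper: "sat_atom w (x, r, d) \<Longrightarrow> upper r \<Longrightarrow> w x \<le> real d"
  by (cases r) (auto simp: sat_atom_def upper_def)

lemma sat_lower: "sat_atom w (x, r, c) \<Longrightarrow> lower r \<Longrightarrow> real c \<le> w x"
  by (cases r) (auto simp: sat_atom_def lower_def)

lemma lower_before_upper:
  assumes "sat_atom wl (y, r2, c)" "lower r2" "sat_atom wu (y, r1, d)" "upper r1"
    and "wl y \<le> wu y"
  shows "\<not> (d < c \<or> (d = c \<and> r1 = Lt) \<or> (d = c \<and> r2 = Gt))"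
  using assms by (cases r1; cases r2) (auto simp: sat_atom_def upper_def lower_def)

lemma wf_reference_clock:
  assumes "\<forall>t\<in>set \<sigma>. wf_transition m t"
  shows "x0 \<notin> clocks_of \<sigma>"
  using assms by (fastforce simp: clocks_of_def atoms_def reset_clocks_def wf_transition_def)

lemma C1_no_run:
  assumes "run \<sigma> vs" "x0 \<notin> clocks_of \<sigma>" "C1 \<sigma>"
  shows False
proof -
  obtain y r1 d r2 c where y: "y \<in> clocks_of \<sigma> - reset_clocks \<sigma>"
    and up: "(y, r1, d) \<in> atoms \<sigma>" "upper r1" and lo: "(y, r2, c) \<in> atoms \<sigma>" "lower r2"
    and bad: "d < c \<or> (d = c \<and> r1 = Lt) \<or> (d = c \<and> r2 = Gt)"
    using assms(3) unfolding C1_def by blast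
  have y0: "y \<noteq> x0" using y assms(2) by blast
  obtain wl where wl: "sat_atom wl (y, r2, c)" "wl y \<le> vs 1 y"
    using run_guard_nonreset[OF assms(1) y0 _ lo(1), of 0] y by auto
  obtain wu where wu: "sat_atom wu (y, r1, d)" "vs 1 y \<le> wu y"
    using run_guard_nonreset[OF assms(1) y0 _ up(1), of 1] y by auto
  from lower_before_upper[OF wl(1) lo(2) wu(1) up(2)] wl(2) wu(2) bad show False by linarith
qed

lemma C2_no_run:
  assumes "run \<sigma> vs" "x0 \<notin> clocks_of \<sigma>" "C2 \<sigma>"
  shows False
proof -
  obtain x y r1 d r2 c where x: "x \<in> reset_clocks \<sigma>" and y: "y \<in> clocks_of \<sigma> - reset_clocks \<sigma>"
    and up: "(y, r1, d) \<in> atoms \<sigma>" "upper r1" and lo: "(x, r2, c) \<in> atoms \<sigma>" "lower r2"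
    and c: "c > 0"
    using assms(3) unfolding C2_def by blast
  have y0: "y \<noteq> x0" and yr: "y \<notin> reset_clocks \<sigma>" and x0': "x \<noteq> x0"
    using x y assms(2) by (auto simp: clocks_of_def)
  have two_rounds: "vs n y + c \<le> vs (Suc (Suc n)) y" for n
  proof -
    obtain w where "sat_atom w (x, r2, c)" "w x \<le> vs (Suc (Suc n)) y - vs n y"
      using run_guard_reset[OF assms(1) y0 yr x0' x lo(1)] by blast
    with sat_lower[OF _ lo(2)] show ?thesis by fastforce
  qed
  have grow: "vs 0 y + real j * c \<le> vs (2 * j) y" for j
  proof (induction j)
    case (Suc j)
    have "vs 0 y + real (Suc j) * c = (vs 0 y + real j * c) + c" by (simp add: algebra_simps)
    also have "\<dots> \<le> vs (2 * j) y + c" using Suc by simp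
    also have "\<dots> \<le> vs (2 * Suc j) y" using two_rounds[of "2 * j"] by simp
    finally show ?case .
  qed simp
  have bounded: "vs n y \<le> d" for n
  proof -
    obtain w where "sat_atom w (y, r1, d)" "vs n y \<le> w y"
      using run_guard_nonreset[OF assms(1) y0 yr up(1)] by blast
    with sat_upper[OF _ up(2)] show ?thesis by fastforce
  qed
  obtain j where "d - vs 0 y < real j * real c" using reals_Archimedean3[of "real c"] c by auto
  with grow[of j] bounded[of "2 * j"] show False by linarith
qed

lemma C3_no_run:
  assumes "run \<sigma> vs" "x0 \<notin> clocks_of \<sigma>" "C3 \<sigma>"
  shows False
proof -
  obtain x y c r1 r2 where x: "x \<in> reset_clocks \<sigma>" "(x, Gt, 0) \<in> atoms \<sigma>"
    and y: "y \<in> clocks_of \<sigma> - reset_clocks \<sigma>"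
    and up: "(y, r1, c) \<in> atoms \<sigma>" "r1 \<in> {Le, Eq}" and lo: "(y, r2, c) \<in> atoms \<sigma>" "r2 \<in> {Ge, Eq}"
    using assms(3) unfolding C3_def by blast
  have y0: "y \<noteq> x0" and yr: "y \<notin> reset_clocks \<sigma>" and x0': "x \<noteq> x0"
    using x y assms(2) by (auto simp: clocks_of_def)
  obtain w where w: "sat_atom w (x, Gt, 0)" "w x \<le> vs 3 y - vs 1 y"
    using run_guard_reset[OF assms(1) y0 yr x0' x, of 1] by (auto simp: numeral_3_eq_3)
  have strict: "vs 1 y < vs 3 y" using w by (simp add: sat_atom_def)
  obtain wl where wl: "sat_atom wl (y, r2, c)" "wl y \<le> vs 1 y"
    using run_guard_nonreset[OF assms(1) y0 yr lo(1), of 0] by auto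
  obtain wu where wu: "sat_atom wu (y, r1, c)" "vs 3 y \<le> wu y"
    using run_guard_nonreset[OF assms(1) y0 yr up(1), of 3] by auto
  have "c \<le> wl y" using sat_lower[OF wl(1)] lo(2) by (auto simp: lower_def)
  moreover have "wu y \<le> c" using sat_upper[OF wu(1)] up(2) by (auto simp: upper_def)
  ultimately show False using wl(2) wu(2) strict by linarith
qed

theorem lemma2:
  fixes m :: nat and \<sigma> :: "transition list" and v0 :: valuation
  assumes "\<forall>t\<in>set \<sigma>. wf_transition m t"
    and "is_valuation m v0"
    and "C1 \<sigma> \<or> C2 \<sigma> \<or> C3 \<sigma>"
  shows "\<not> omega_iterable \<sigma> v0"
proof
  assume "omega_iterable \<sigma> v0"
  then obtain vs where vs: "run \<sigma> vs" using omega_iterable_run by blast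
  have ref: "x0 \<notin> clocks_of \<sigma>" using wf_reference_clock[OF assms(1)] .
  from assms(3) show False
    using C1_no_run[OF vs ref] C2_no_run[OF vs ref] C3_no_run[OF vs ref] by blast
qed

end
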